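(* Let $\alpha\in(0,1]$. For $x\geqslant1$ define the sequence $\{z_k(x)\}_{k\geqslant-1}$ by $z_{-1}(x)=1$, $z_0(x)=x$ and $$\alpha z_{k+1}-z_k+\frac1{z_k}+(1-\alpha)z_{k-1}-\frac1{z_{k-1}}=0\qquad(k\geqslant0).$$ Then for every $k\geqslant0$, $z_k(x)$ is well defined (i.e. no division by zero occurs) for all $x\geqslant1$, $z_k$ is a strictly increasing smooth function of $x$ on $[1,\infty)$, $z_k(1)=1$, and $z_k(x)\to\infty$ as $x\to\infty$. *)

theory Defs
  imports "HOL-Analysis.Analysis"
begin

text \<open>zpair a x k = (z_{k-1}(x), z_k(x)) for k >= 0, with z_{-1}(x) = 1, z_0(x) = x and
  a z_{k+1} - z_k + 1/z_k + (1-a) z_{k-1} - 1/z_{k-1} = 0 solved for z_{k+1}.\<close>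
fun zpair :: "real \<Rightarrow> real \<Rightarrow> nat \<Rightarrow> real \<times> real" where
  "zpair a x 0 = (1, x)"
| "zpair a x (Suc k) =
     (let (p, c) = zpair a x k in (c, (c - 1 / c - (1 - a) * p + 1 / p) / a))"

definition zs :: "real \<Rightarrow> real \<Rightarrow> nat \<Rightarrow> real" where
  "zs a x k = snd (zpair a x k)"

text \<open>Smoothness on a (possibly non-open) set S: f is infinitely differentiable on
  some open neighbourhood of S.\<close>
definition smooth_on :: "real set \<Rightarrow> (real \<Rightarrow> real) \<Rightarrow> bool" where
  "smooth_on S f \<longleftrightarrow>
     (\<exists>U. open U \<and> S \<subseteq> U \<and> (\<forall>n. \<forall>y\<in>U. (deriv ^^ n) f differentiable (at y)))"

end

theory Submission
  imports Defs
begin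

text \<open>The quantity \<open>a z\<^sub>k\<^sub>+\<^sub>1 - (1 - a) z\<^sub>k + 1/z\<^sub>k\<close> is conserved by the recurrence and equals
  \<open>a (x + 1)\<close> at \<open>k = -1\<close>. Hence \<open>z\<^sub>k\<^sub>+\<^sub>1 = x + 1 + g(z\<^sub>k)\<close> with \<open>g t = ((1 - a) t - 1/t)/a\<close>,
  which is increasing on \<open>t > 0\<close> with \<open>g 1 = -1\<close>. By induction \<open>z\<^sub>k(x) \<ge> x \<ge> 1\<close>, \<open>z\<^sub>k(1) = 1\<close>
  and \<open>z\<^sub>k\<close> is strictly increasing. Each \<open>z\<^sub>k\<close> is a rational function of \<open>x\<close> whose
  denominators do not vanish on an open neighbourhood of \<open>[1, \<infinity>)\<close>, hence smooth there.\<close>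

inductive_set rational_on :: "real set \<Rightarrow> (real \<Rightarrow> real) set" for U where
  const: "(\<lambda>x. c) \<in> rational_on U"
| ident: "(\<lambda>x. x) \<in> rational_on U"
| inverse: "f \<in> rational_on U \<Longrightarrow> (\<forall>x\<in>U. f x \<noteq> 0) \<Longrightarrow> (\<lambda>x. inverse (f x)) \<in> rational_on U"
| add: "f \<in> rational_on U \<Longrightarrow> g \<in> rational_on U \<Longrightarrow> (\<lambda>x. f x + g x) \<in> rational_on U"
| mult: "f \<in> rational_on U \<Longrightarrow> g \<in> rational_on U \<Longrightarrow> (\<lambda>x. f x * g x) \<in> rational_on U"

lemma rational_on_subset:
  assumes "f \<in> rational_on U" "V \<subseteq> U"
  shows "f \<in> rational_on V"
  using assms by (induction rule: rational_on.induct) (auto intro: rational_on.intros)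

lemma rational_on_has_derivative:
  assumes "f \<in> rational_on U"
  shows "\<exists>d\<in>rational_on U. \<forall>y\<in>U. (f has_real_derivative d y) (at y)"
  using assms
proof (induction rule: rational_on.induct)
  case const
  show ?case by (intro bexI[of _ "\<lambda>x. 0"]) (auto intro: rational_on.intros)
next
  case ident
  show ?case by (intro bexI[of _ "\<lambda>x. 1"]) (auto intro: rational_on.intros)
next
  case (inverse f)
  then obtain d where d: "d \<in> rational_on U" "\<forall>y\<in>U. (f has_real_derivative d y) (at y)"
    by blast
  let ?d' = "\<lambda>x. (- 1 * d x) * (inverse (f x) * inverse (f x))"
  show ?case
  proof (intro bexI[of _ ?d'] ballI)
    show "?d' \<in> rational_on U"
      using d(1) rational_on.inverse[OF inverse.hyps]
      by (intro rational_on.mult rational_on.const)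
    fix y assume "y \<in> U"
    then show "((\<lambda>x. inverse (f x)) has_real_derivative ?d' y) (at y)"
      using DERIV_inverse_fun[OF d(2)[rule_format]] inverse.hyps(2)
      by (simp add: power2_eq_square)
  qed
next
  case (add f g)
  then obtain d e where "d \<in> rational_on U" "\<forall>y\<in>U. (f has_real_derivative d y) (at y)"
    "e \<in> rational_on U" "\<forall>y\<in>U. (g has_real_derivative e y) (at y)" by blast
  then show ?case
    by (intro bexI[of _ "\<lambda>x. d x + e x"] ballI DERIV_add rational_on.add) auto
next
  case (mult f g)
  then obtain d e where de: "d \<in> rational_on U" "\<forall>y\<in>U. (f has_real_derivative d y) (at y)"
    "e \<in> rational_on U" "\<forall>y\<in>U. (g has_real_derivative e y) (at y)" by blast
  show ?case
  proof (intro bexI[of _ "\<lambda>x. d x * g x + f x * e x"] ballI)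
    show "(\<lambda>x. d x * g x + f x * e x) \<in> rational_on U"
      using de mult.hyps by (intro rational_on.add rational_on.mult)
    fix y assume "y \<in> U"
    then show "((\<lambda>x. f x * g x) has_real_derivative d y * g y + f y * e y) (at y)"
      using DERIV_mult[OF de(2)[rule_format] de(4)[rule_format]] by (simp add: mult.commute)
  qed
qed

lemma rational_on_higher_deriv:
  assumes "f \<in> rational_on U" "open U"
  shows "\<exists>h\<in>rational_on U. \<forall>y\<in>U. (deriv ^^ n) f y = h y"
proof (induction n)
  case 0
  then show ?case using assms(1) by auto
next
  case (Suc n)
  then obtain h where h: "h \<in> rational_on U" "\<forall>y\<in>U. (deriv ^^ n) f y = h y" by blast
  obtain d where d: "d \<in> rational_on U" "\<forall>y\<in>U. (h has_real_derivative d y) (at y)"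
    using rational_on_has_derivative[OF h(1)] by blast
  have "((deriv ^^ n) f has_real_derivative d y) (at y)" if "y \<in> U" for y
    using has_field_derivative_transform_within_open[OF d(2)[rule_format, OF that] assms(2) that] h(2)
    by auto
  then have "\<forall>y\<in>U. (deriv ^^ Suc n) f y = d y" by (simp add: DERIV_imp_deriv)
  then show ?case using d(1) by blast
qed

lemma smooth_on_rational_on:
  assumes "f \<in> rational_on U" "open U" "S \<subseteq> U"
  shows "smooth_on S f"
  unfolding smooth_on_def
proof (intro exI[of _ U] conjI allI ballI assms(2,3))
  fix n y assume y: "y \<in> U"
  obtain h where h: "h \<in> rational_on U" "\<forall>y\<in>U. (deriv ^^ n) f y = h y"
    using rational_on_higher_deriv[OF assms(1,2)] by blast
  obtain d where "(h has_real_derivative d y) (at y)"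
    using rational_on_has_derivative[OF h(1)] y by blast
  then have "((deriv ^^ n) f has_real_derivative d y) (at y)"
    using has_field_derivative_transform_within_open[OF _ assms(2) y] h(2) by auto
  then show "(deriv ^^ n) f differentiable (at y)"
    using real_differentiable_def by blast
qed

lemma open_nonzero_rational_on:
  assumes "f \<in> rational_on U" "open U"
  shows "open {x\<in>U. f x \<noteq> 0}"
proof -
  have "continuous_on U f"
    using rational_on_has_derivative[OF assms(1)]
    by (meson DERIV_isCont continuous_at_imp_continuous_on)
  then have "open (U \<inter> f -` (- {0}))"
    using continuous_open_preimage assms(2) by blast
  then show ?thesis by (simp add: vimage_def Int_def)
qed

lemma fst_zpair_Suc: "fst (zpair a x (Suc k)) = zs a x k"
  by (cases "zpair a x k") (simp add: zs_def)

lemma zs_0 [simp]: "zs a x 0 = x"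
  by (simp add: zs_def)

lemma zs_1: "zs a x (Suc 0) = (x - 1 / x - (1 - a) + 1) / a"
  by (simp add: zs_def)

lemma zs_Suc_Suc:
  "zs a x (Suc (Suc k)) =
     (zs a x (Suc k) - 1 / zs a x (Suc k) - (1 - a) * zs a x k + 1 / zs a x k) / a"
proof -
  obtain p c where pc: "zpair a x (Suc k) = (p, c)" by (cases "zpair a x (Suc k)")
  then have "p = zs a x k" "c = zs a x (Suc k)"
    using fst_zpair_Suc[of a x k] by (simp_all only: zs_def fst_conv snd_conv)
  moreover have "zs a x (Suc (Suc k)) = (c - 1 / c - (1 - a) * p + 1 / p) / a"
    unfolding zs_def by (subst zpair.simps(2)) (simp only: pc Let_def prod.case snd_conv)
  ultimately show ?thesis by simp
qed

lemma zs_conserved: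
  assumes "a \<noteq> 0"
  shows "a * zs a x (Suc k) - (1 - a) * zs a x k + 1 / zs a x k = a * (x + 1)"
proof (induction k)
  case 0
  show ?case using assms by (simp add: zs_1 field_simps)
next
  case (Suc k)
  have "a * zs a x (Suc (Suc k)) =
      zs a x (Suc k) - 1 / zs a x (Suc k) - ((1 - a) * zs a x k - 1 / zs a x k)"
    using assms by (simp add: zs_Suc_Suc)
  also have "(1 - a) * zs a x k - 1 / zs a x k = a * zs a x (Suc k) - a * (x + 1)"
    using Suc.IH by simp
  finally show ?case by (simp add: algebra_simps)
qed

lemma zs_Suc:
  assumes "a \<noteq> 0"
  shows "zs a x (Suc k) = x + 1 + ((1 - a) * zs a x k - 1 / zs a x k) / a"
  using zs_conserved[OF assms, of x k] assms by (simp add: field_simps)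

lemma zs_ge:
  assumes "0 < a" "a \<le> 1" "1 \<le> x"
  shows "x \<le> zs a x k"
proof (induction k)
  case 0
  then show ?case by simp
next
  case (Suc k)
  let ?z = "zs a x k"
  have "1 \<le> ?z" using Suc assms(3) by linarith
  then have "(1 - a) * 1 - 1 \<le> (1 - a) * ?z - 1 / ?z"
    using assms(2) by (intro diff_mono mult_left_mono) auto
  then have "-1 \<le> ((1 - a) * ?z - 1 / ?z) / a"
    using assms(1) by (simp add: field_simps)
  then show ?case using zs_Suc assms(1) by simp
qed

lemma zs_at_1:
  assumes "a \<noteq> 0"
  shows "zs a 1 k = 1"
  using assms by (induction k) (simp_all add: zs_Suc field_simps)

lemma zs_strict_mono:
  assumes "0 < a" "a \<le> 1" "1 \<le> x" "x < y"
  shows "zs a x k < zs a y k"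
proof (induction k)
  case 0
  then show ?case using assms(4) by simp
next
  case (Suc k)
  have "1 \<le> zs a x k" using zs_ge[OF assms(1-3), of k] assms(3) by linarith
  then have "(1 - a) * zs a x k - 1 / zs a x k \<le> (1 - a) * zs a y k - 1 / zs a y k"
    using Suc assms(2) by (intro diff_mono mult_left_mono divide_left_mono) auto
  then have "((1 - a) * zs a x k - 1 / zs a x k) / a \<le> ((1 - a) * zs a y k - 1 / zs a y k) / a"
    using assms(1) by (intro divide_right_mono) auto
  then show ?case using zs_Suc assms(1,4) by simp
qed

fun zs_domain :: "real \<Rightarrow> nat \<Rightarrow> real set" where
  "zs_domain a 0 = UNIV"
| "zs_domain a (Suc k) = {x \<in> zs_domain a k. zs a x k \<noteq> 0}"

lemma zs_rational_on:
  assumes "a \<noteq> 0"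
  shows "open (zs_domain a k) \<and> (\<lambda>x. zs a x k) \<in> rational_on (zs_domain a k)"
proof (induction k)
  case 0
  then show ?case by (simp add: rational_on.ident)
next
  case (Suc k)
  let ?U = "zs_domain a (Suc k)"
  have "open ?U" using Suc open_nonzero_rational_on by simp
  moreover have "(\<lambda>x. zs a x (Suc k)) \<in> rational_on ?U"
  proof -
    have "(\<lambda>x. zs a x k) \<in> rational_on ?U"
      using Suc rational_on_subset by auto
    then have "(\<lambda>x. (x + 1) + ((1 - a) / a * zs a x k + (- 1 / a) * inverse (zs a x k)))
        \<in> rational_on ?U"
      by (intro rational_on.intros) auto
    moreover have "(\<lambda>x. (x + 1) + ((1 - a) / a * zs a x k + (- 1 / a) * inverse (zs a x k))) =
        (\<lambda>x. zs a x (Suc k))"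
      using assms by (simp add: zs_Suc fun_eq_iff field_simps)
    ultimately show ?thesis by simp
  qed
  ultimately show ?case ..
qed

lemma atLeast_1_subset_zs_domain:
  assumes "0 < a" "a \<le> 1"
  shows "{1..} \<subseteq> zs_domain a k"
proof (induction k)
  case (Suc k)
  have "zs a x k \<noteq> 0" if "1 \<le> x" for x
    using zs_ge[OF assms that, of k] that by linarith
  then show ?case using Suc by auto
qed simp

theorem lemma2:
  fixes a :: real
  assumes "0 < a" and "a \<le> 1"
  shows "\<forall>k::nat.
           (\<forall>x::real. x \<ge> 1 \<longrightarrow> zs a x k \<noteq> 0) \<and>
           strict_mono_on {1..} (\<lambda>x. zs a x k) \<and>
           smooth_on {1..} (\<lambda>x. zs a x k) \<and>
           zs a 1 k = 1 \<and>
           filterlim (\<lambda>x. zs a x k) at_top at_top"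
proof (intro allI conjI impI)
  fix k and x :: real
  assume "x \<ge> 1"
  then show "zs a x k \<noteq> 0" using zs_ge[OF assms, of x k] by linarith
next
  fix k
  show "strict_mono_on {1..} (\<lambda>x. zs a x k)"
    by (rule strict_mono_onI) (use zs_strict_mono[OF assms] in auto)
  show "smooth_on {1..} (\<lambda>x. zs a x k)"
    using zs_rational_on[of a k] atLeast_1_subset_zs_domain[OF assms, of k] assms(1)
    by (intro smooth_on_rational_on[of _ "zs_domain a k"]) auto
  show "zs a 1 k = 1" using zs_at_1 assms(1) by simp
  have "\<forall>\<^sub>F x in at_top. x \<le> zs a x k"
    using eventually_ge_at_top[of "1::real"] by eventually_elim (use zs_ge[OF assms] in auto)
  then show "filterlim (\<lambda>x. zs a x k) at_top at_top"
    by (rule filterlim_at_top_mono[OF filterlim_ident])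
qed

end
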